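(* Let $b\ge2$. Define the estimated MMD loss $$\mathsf{L}'^k_{b,n}(\theta,u_{1:b})=-\frac{2}{nb}\sum_{i=1}^n\sum_{j=1}^bk(u_j,y_i)+\frac{1}{b(b-1)}\sum_{j=1}^b\sum_{j'\ne j}k(u_j,u_{j'}),$$ and, with $v_{1:b}\sim p_v$ i.i.d. and $u_k=G_\theta(v_k)$, $$\varphi_{b,n}(\theta)=\sum_{k=1}^b\sum_{l=1}^p\Big[\frac{\partial}{\partial u_{kl}}\mathsf{L}'^k_{b,n}(\theta,u_{1:b})\Big]_{u_{1:b}=G_\theta(v_{1:b})}\nabla_\theta G_{\theta,l}(v_k).$$ Then $\mathbb{E}_{v_{1:b}\sim p_v}[\varphi_{b,n}(\theta)]=\nabla_\theta\mathsf{L}^k_n(\theta)$. Moreover, suppose there exist $Q_j:\mathbb{R}^p\times\Theta\to\mathbb{R}$ and $R_j:\Theta\to\mathbb{R}$, $j=1,\dots,d$, such that for all $v,v'$ in the support of $p_v$ and all $y$, $$Q_j(y,\theta)\ge\Big|\sum_{l=1}^p\Big[\frac{\partial}{\partial u_l}k(y,u)\Big]_{u=G_\theta(v)}\frac{\partial}{\partial\theta_j}G_{\theta,l}(v)\Big|,$$ $$R_j(\theta)\ge\Big|\sum_{l=1}^p\Big[\frac{\partial}{\partial u_l}k(u,G_\theta(v'))\Big]_{u=G_\theta(v)}\frac{\partial}{\partial\theta_j}G_{\theta,l}(v)+\Big[\frac{\partial}{\partial u'_l}k(G_\theta(v),u')\Big]_{u'=G_\theta(v')}\frac{\partial}{\partial\theta_j}G_{\theta,l}(v')\Big|.$$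 Then, for $\hat\lambda_j(\theta,\nu)=\max\{\nu_j[-\nabla_\theta\log\pi(\theta)+\omega\varphi_{b,n}(\theta)]_j,0\}$, for all $v_{1:b}$, $\theta$ and $\nu\in\{-1,1\}^d$, $$\hat\lambda_j(\theta,\nu)\le\Big|\frac{\partial}{\partial\theta_j}\log\pi(\theta)\Big|+\omega\frac{2}{n}\sum_{i=1}^nQ_j(y_i,\theta)+\omega R_j(\theta).$$
   Context: Observations $y_1,\dots,y_n\in\mathbb{R}^p$. $k:\mathbb{R}^p\times\mathbb{R}^p\to\mathbb{R}_{\ge0}$ is a symmetric positive-definite, differentiable kernel. The model $P_\theta$, $\theta\in\Theta\subseteq\mathbb{R}^d$, is given by a generator: $u\sim P_\theta$ is obtained as $u=G_\theta(v)=(G_{\theta,1}(v),\dots,G_{\theta,p}(v))$ with $v\sim p_v$, where $p_v$ does not depend on $\theta$ and $G_\theta(v)$ is differentiable in $\theta$; differentiation in $\theta$ is assumed interchangeable with expectation over $v$. The MMD loss is $\mathsf{L}^k_n(\theta)=-\frac2n\sum_{i=1}^n\mathbb{E}_{U\sim P_\theta}[k(U,y_i)]+\mathbb{E}_{U,U'\sim P_\theta\text{ i.i.d.}}[k(U,U')]$. $\pi$ is a differentiable prior density and $\omega>0$. *)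

theory Defs
  imports "HOL-Probability.Probability"
begin

definition partial_deriv :: "(real^'n \<Rightarrow> real) \<Rightarrow> real^'n \<Rightarrow> 'n \<Rightarrow> real" where
  "partial_deriv f x i = deriv (\<lambda>t. f (x + t *\<^sub>R axis i 1)) 0"

definition pd_kernel :: "('a \<Rightarrow> 'a \<Rightarrow> real) \<Rightarrow> bool" where
  "pd_kernel k \<longleftrightarrow>
     (\<forall>(m::nat) (x::nat \<Rightarrow> 'a) (c::nat \<Rightarrow> real).
        (\<Sum>i<m. \<Sum>j<m. c i * c j * k (x i) (x j)) \<ge> 0)"

definition MMD_loss ::
  "(real^'p \<Rightarrow> real^'p \<Rightarrow> real) \<Rightarrow> 'v measure \<Rightarrow> ('a \<Rightarrow> 'v \<Rightarrow> real^'p)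
     \<Rightarrow> nat \<Rightarrow> (nat \<Rightarrow> real^'p) \<Rightarrow> 'a \<Rightarrow> real" where
  "MMD_loss k pv G n y \<theta> =
     - 2 / real n * (\<Sum>i=1..n. \<integral>v. k (G \<theta> v) (y i) \<partial>pv)
     + (\<integral>z. k (G \<theta> (fst z)) (G \<theta> (snd z)) \<partial>(pv \<Otimes>\<^sub>M pv))"

definition est_MMD_loss ::
  "(real^'p \<Rightarrow> real^'p \<Rightarrow> real) \<Rightarrow> nat \<Rightarrow> nat \<Rightarrow> (nat \<Rightarrow> real^'p)
     \<Rightarrow> (nat \<Rightarrow> real^'p) \<Rightarrow> real" where
  "est_MMD_loss k b n y u =
     - 2 / (real n * real b) * (\<Sum>i=1..n. \<Sum>j=1..b. k (u j) (y i))
     + 1 / (real b * (real b - 1)) * (\<Sum>j=1..b. \<Sum>j'\<in>{1..b} - {j}. k (u j) (u j'))"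

definition partial_u ::
  "((nat \<Rightarrow> real^'p) \<Rightarrow> real) \<Rightarrow> (nat \<Rightarrow> real^'p) \<Rightarrow> nat \<Rightarrow> 'p \<Rightarrow> real" where
  "partial_u F u kk l = deriv (\<lambda>t. F (u(kk := u kk + t *\<^sub>R axis l 1))) 0"

definition phi ::
  "(real^'p \<Rightarrow> real^'p \<Rightarrow> real) \<Rightarrow> (real^'d \<Rightarrow> 'v \<Rightarrow> real^'p) \<Rightarrow> nat \<Rightarrow> nat
     \<Rightarrow> (nat \<Rightarrow> real^'p) \<Rightarrow> real^'d \<Rightarrow> (nat \<Rightarrow> 'v) \<Rightarrow> real^'d" where
  "phi k G b n y \<theta> vs =
     (\<chi> j. \<Sum>kk=1..b. \<Sum>l\<in>UNIV.
        partial_u (est_MMD_loss k b n y) (\<lambda>m. G \<theta> (vs m)) kk l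
        * partial_deriv (\<lambda>\<theta>'. G \<theta>' (vs kk) $ l) \<theta> j)"

definition lambda_hat ::
  "(real^'d \<Rightarrow> real) \<Rightarrow> real \<Rightarrow> real^'d \<Rightarrow> real^'d \<Rightarrow> real^'d \<Rightarrow> 'd \<Rightarrow> real" where
  "lambda_hat prior \<omega> ph \<theta> \<nu> j =
     max (\<nu> $ j * (- partial_deriv (\<lambda>\<theta>'. ln (prior \<theta>')) \<theta> j + \<omega> * ph $ j)) 0"

end

theory Submission
  imports Defs
begin

text \<open>
  Differentiating the estimated loss in the sample point u_a picks out exactly the terms in
  which u_a occurs, so by the chain rule phi is -2/(nb) times a sum of b n single-sample terms
  d/d\<theta> k(G_\<theta>(v_a), y_i) plus 1/(b(b-1)) times a sum over the b(b-1) ordered pairs a \<noteq> c of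
  d/d\<theta> k(G_\<theta>(v_a), G_\<theta>(v_c)). Under the product measure every single sample has law p_v
  and every pair of distinct samples has law p_v \<otimes> p_v, so the expectation of phi is the
  derivative of the MMD loss once derivative and integral are interchanged. The same
  decomposition bounds |phi_j| term by term by 2/n \<Sum> Q_j(y_i) + R_j, and the switching rate
  is at most the absolute value of its argument.
\<close>

section \<open>Partial derivatives and the chain rule\<close>

lemma has_derivative_imp_partial_deriv:
  fixes f :: "real^'n \<Rightarrow> real"
  assumes "(f has_derivative f') (at x)"
  shows "((\<lambda>t. f (x + t *\<^sub>R axis i 1)) has_real_derivative f' (axis i 1)) (at 0)"
    and "partial_deriv f x i = f' (axis i 1)"
proof -
  have line: "((\<lambda>t. x + t *\<^sub>R axis i 1) has_derivative (\<lambda>t. t *\<^sub>R axis i 1)) (at 0)"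
    by (auto intro!: derivative_eq_intros)
  have "((\<lambda>t. f (x + t *\<^sub>R axis i 1)) has_derivative (\<lambda>t. f' (t *\<^sub>R axis i 1))) (at 0)"
    using has_derivative_compose[OF line] assms by simp
  moreover have "(\<lambda>t. f' (t *\<^sub>R axis i 1)) = (*) (f' (axis i 1))"
    using has_derivative_linear[OF assms] by (auto simp: linear_scale fun_eq_iff)
  ultimately show "((\<lambda>t. f (x + t *\<^sub>R axis i 1)) has_real_derivative f' (axis i 1)) (at 0)"
    by (simp add: has_field_derivative_def)
  then show "partial_deriv f x i = f' (axis i 1)"
    unfolding partial_deriv_def by (rule DERIV_imp_deriv)
qed

lemma has_real_derivative_partial_deriv:
  fixes f :: "real^'n \<Rightarrow> real"
  assumes "f differentiable at x"
  shows "((\<lambda>t. f (x + t *\<^sub>R axis i 1)) has_real_derivative partial_deriv f x i) (at 0)"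
  using assms has_derivative_imp_partial_deriv unfolding differentiable_def by metis

lemma linear_eq_sum_axis:
  fixes L :: "real^'n \<Rightarrow> real"
  assumes "linear L"
  shows "L h = (\<Sum>l\<in>UNIV. L (axis l 1) * h $ l)"
proof -
  have "L h = L (\<Sum>l\<in>UNIV. (h $ l) *\<^sub>R axis l 1)"
    using basis_expansion[of h] by (simp add: scalar_mult_eq_scaleR)
  also have "\<dots> = (\<Sum>l\<in>UNIV. L (axis l 1) * h $ l)"
    using assms by (simp add: linear_sum linear_scale mult.commute)
  finally show ?thesis .
qed

lemma partial_deriv_comp:
  fixes f :: "real^'n \<Rightarrow> real" and g :: "real^'d \<Rightarrow> real^'n"
  assumes "f differentiable at (g \<theta>)" and "g differentiable at \<theta>"
  shows "partial_deriv (\<lambda>\<theta>'. f (g \<theta>')) \<theta> j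
       = (\<Sum>l\<in>UNIV. partial_deriv f (g \<theta>) l * partial_deriv (\<lambda>\<theta>'. g \<theta>' $ l) \<theta> j)"
proof -
  obtain f' g' where f': "(f has_derivative f') (at (g \<theta>))" and g': "(g has_derivative g') (at \<theta>)"
    using assms unfolding differentiable_def by blast
  have g'_comp: "((\<lambda>\<theta>'. g \<theta>' $ l) has_derivative (\<lambda>h. g' h $ l)) (at \<theta>)" for l
    using bounded_linear.has_derivative[OF bounded_linear_vec_nth g'] .
  have "((\<lambda>\<theta>'. f (g \<theta>')) has_derivative (\<lambda>h. f' (g' h))) (at \<theta>)"
    using has_derivative_compose[OF g' f'] by (simp add: o_def)
  then have "partial_deriv (\<lambda>\<theta>'. f (g \<theta>')) \<theta> j = f' (g' (axis j 1))"
    by (rule has_derivative_imp_partial_deriv)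
  also have "\<dots> = (\<Sum>l\<in>UNIV. f' (axis l 1) * g' (axis j 1) $ l)"
    using has_derivative_linear[OF f'] by (rule linear_eq_sum_axis)
  finally show ?thesis
    by (simp add: has_derivative_imp_partial_deriv(2)[OF f'] has_derivative_imp_partial_deriv(2)[OF g'_comp])
qed

lemma differentiable_at_fst_slice:
  assumes "(\<lambda>w. k (fst w) (snd w)) differentiable at (x, z)"
  shows "(\<lambda>u. k u z) differentiable at x"
  using differentiable_compose[of "\<lambda>w. k (fst w) (snd w)" "\<lambda>u. (u, z)"] assms by simp

lemma differentiable_at_snd_slice:
  assumes "(\<lambda>w. k (fst w) (snd w)) differentiable at (x, z)"
  shows "(\<lambda>u. k x u) differentiable at z"
  using differentiable_compose[of "\<lambda>w. k (fst w) (snd w)" "\<lambda>u. (x, u)"] assms by simp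

lemma partial_deriv_comp2:
  fixes k :: "real^'m \<Rightarrow> real^'n \<Rightarrow> real"
  assumes k: "(\<lambda>w. k (fst w) (snd w)) differentiable at (g1 \<theta>, g2 \<theta>)"
    and g1: "g1 differentiable at \<theta>" and g2: "g2 differentiable at \<theta>"
  shows "partial_deriv (\<lambda>\<theta>'. k (g1 \<theta>') (g2 \<theta>')) \<theta> j
       = partial_deriv (\<lambda>\<theta>'. k (g1 \<theta>') (g2 \<theta>)) \<theta> j + partial_deriv (\<lambda>\<theta>'. k (g1 \<theta>) (g2 \<theta>')) \<theta> j"
proof -
  obtain K' g1' g2' where K': "((\<lambda>w. k (fst w) (snd w)) has_derivative K') (at (g1 \<theta>, g2 \<theta>))"
    and g1': "(g1 has_derivative g1') (at \<theta>)" and g2': "(g2 has_derivative g2') (at \<theta>)"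
    using assms unfolding differentiable_def by blast
  have "((\<lambda>\<theta>'. (g1 \<theta>', g2 \<theta>')) has_derivative (\<lambda>h. (g1' h, g2' h))) (at \<theta>)"
    using g1' g2' by (rule has_derivative_Pair)
  from has_derivative_compose[OF this K']
  have "((\<lambda>\<theta>'. k (g1 \<theta>') (g2 \<theta>')) has_derivative (\<lambda>h. K' (g1' h, g2' h))) (at \<theta>)"
    by simp
  moreover have "((\<lambda>\<theta>'. k (g1 \<theta>') (g2 \<theta>)) has_derivative (\<lambda>h. K' (g1' h, 0))) (at \<theta>)"
    using has_derivative_compose[OF has_derivative_Pair[OF g1' has_derivative_const] K'] by simp
  moreover have "((\<lambda>\<theta>'. k (g1 \<theta>) (g2 \<theta>')) has_derivative (\<lambda>h. K' (0, g2' h))) (at \<theta>)"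
    using has_derivative_compose[OF has_derivative_Pair[OF has_derivative_const g2'] K'] by simp
  moreover have "K' (g1' h, g2' h) = K' (g1' h, 0) + K' (0, g2' h)" for h
    using linear_add[OF has_derivative_linear[OF K'], of "(g1' h, 0)" "(0, g2' h)"] by simp
  ultimately show ?thesis
    by (simp add: has_derivative_imp_partial_deriv(2))
qed

section \<open>Decomposition of the gradient estimator\<close>

definition kernel_grad ::
  "(real^'p \<Rightarrow> real^'p \<Rightarrow> real) \<Rightarrow> (real^'d \<Rightarrow> 'v \<Rightarrow> real^'p) \<Rightarrow> real^'d \<Rightarrow> 'd
     \<Rightarrow> 'v \<Rightarrow> real^'p \<Rightarrow> real" where
  "kernel_grad k G \<theta> j v z =
     (\<Sum>l\<in>UNIV. partial_deriv (\<lambda>u. k u z) (G \<theta> v) l * partial_deriv (\<lambda>\<theta>'. G \<theta>' v $ l) \<theta> j)"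

definition kernel_pair_grad ::
  "(real^'p \<Rightarrow> real^'p \<Rightarrow> real) \<Rightarrow> (real^'d \<Rightarrow> 'v \<Rightarrow> real^'p) \<Rightarrow> real^'d \<Rightarrow> 'd
     \<Rightarrow> 'v \<Rightarrow> 'v \<Rightarrow> real" where
  "kernel_pair_grad k G \<theta> j v v' =
     (\<Sum>l\<in>UNIV. partial_deriv (\<lambda>u. k u (G \<theta> v')) (G \<theta> v) l * partial_deriv (\<lambda>\<theta>'. G \<theta>' v $ l) \<theta> j
              + partial_deriv (\<lambda>u. k (G \<theta> v) u) (G \<theta> v') l * partial_deriv (\<lambda>\<theta>'. G \<theta>' v' $ l) \<theta> j)"

lemma kernel_grad_eq_partial_deriv:
  assumes k: "\<forall>x z. (\<lambda>w. k (fst w) (snd w)) differentiable at (x, z)"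
    and G: "(\<lambda>\<theta>'. G \<theta>' v) differentiable at \<theta>"
  shows "kernel_grad k G \<theta> j v z = partial_deriv (\<lambda>\<theta>'. k (G \<theta>' v) z) \<theta> j"
proof -
  have "(\<lambda>u. k u z) differentiable at (G \<theta> v)"
    using differentiable_at_fst_slice[of k "G \<theta> v" z] k by blast
  from partial_deriv_comp[OF this G] show ?thesis
    unfolding kernel_grad_def by simp
qed

lemma kernel_pair_grad_eq_partial_deriv:
  assumes k: "\<forall>x z. (\<lambda>w. k (fst w) (snd w)) differentiable at (x, z)"
    and G: "(\<lambda>\<theta>'. G \<theta>' v) differentiable at \<theta>" "(\<lambda>\<theta>'. G \<theta>' v') differentiable at \<theta>"
  shows "kernel_pair_grad k G \<theta> j v v' = partial_deriv (\<lambda>\<theta>'. k (G \<theta>' v) (G \<theta>' v')) \<theta> j"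
proof -
  have "partial_deriv (\<lambda>\<theta>'. k (G \<theta>' v) (G \<theta>' v')) \<theta> j
      = partial_deriv (\<lambda>\<theta>'. k (G \<theta>' v) (G \<theta> v')) \<theta> j + partial_deriv (\<lambda>\<theta>'. k (G \<theta> v) (G \<theta>' v')) \<theta> j"
    using partial_deriv_comp2[of k "\<lambda>\<theta>'. G \<theta>' v" \<theta> "\<lambda>\<theta>'. G \<theta>' v'"] k G by simp
  also have "\<dots> = kernel_pair_grad k G \<theta> j v v'"
  proof -
    have "(\<lambda>u. k u (G \<theta> v')) differentiable at (G \<theta> v)" "(\<lambda>u. k (G \<theta> v) u) differentiable at (G \<theta> v')"
      using k differentiable_at_fst_slice[of k] differentiable_at_snd_slice[of k] by blast+
    from partial_deriv_comp[OF this(1) G(1)] partial_deriv_comp[OF this(2) G(2)]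
    show ?thesis unfolding kernel_pair_grad_def sum.distrib by simp
  qed
  finally show ?thesis ..
qed

lemma sum_offdiag_row_col:
  fixes f g :: "'a \<Rightarrow> real"
  assumes "finite A" "a \<in> A"
  shows "(\<Sum>i\<in>A. \<Sum>i'\<in>A - {i}. (if i = a then f i' else if i' = a then g i else 0))
       = (\<Sum>i'\<in>A - {a}. f i') + (\<Sum>i\<in>A - {a}. g i)"
proof -
  let ?F = "\<lambda>i. \<Sum>i'\<in>A - {i}. (if i = a then f i' else if i' = a then g i else 0)"
  have "(\<Sum>i\<in>A. ?F i) = ?F a + (\<Sum>i\<in>A - {a}. ?F i)"
    using assms by (rule sum.remove)
  also have "(\<Sum>i\<in>A - {a}. ?F i) = (\<Sum>i\<in>A - {a}. g i)"
  proof (rule sum.cong[OF refl])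
    fix i assume i: "i \<in> A - {a}"
    then have "?F i = (\<Sum>i'\<in>A - {i}. (if i' = a then g i else 0))" by auto
    also have "\<dots> = g i" using i assms by (auto simp: sum.delta)
    finally show "?F i = g i" .
  qed
  finally show ?thesis by simp
qed

lemma sum_offdiag_swap:
  fixes f :: "'a \<Rightarrow> 'a \<Rightarrow> real"
  assumes "finite A"
  shows "(\<Sum>i\<in>A. \<Sum>i'\<in>A - {i}. f i i') = (\<Sum>i'\<in>A. \<Sum>i\<in>A - {i'}. f i i')"
proof -
  have row: "(\<Sum>i'\<in>A - {i}. f i i') = (\<Sum>i'\<in>A. if i' = i then 0 else f i i')" for i
    using assms by (simp add: sum.If_cases Diff_eq)
  have col: "(\<Sum>i\<in>A - {i'}. f i i') = (\<Sum>i\<in>A. if i' = i then 0 else f i i')" for i'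
    using assms by (simp add: sum.If_cases Diff_eq eq_commute)
  show ?thesis unfolding row col by (rule sum.swap)
qed
lemma partial_u_est_MMD_loss:
  assumes k: "\<forall>x z. (\<lambda>w. k (fst w) (snd w)) differentiable at (x, z)" and a: "a \<in> {1..b}"
  shows "partial_u (est_MMD_loss k b n y) u a l =
     - 2 / (real n * real b) * (\<Sum>i=1..n. partial_deriv (\<lambda>w. k w (y i)) (u a) l)
     + 1 / (real b * (real b - 1)) * ((\<Sum>c\<in>{1..b}-{a}. partial_deriv (\<lambda>w. k w (u c)) (u a) l)
                                    + (\<Sum>c\<in>{1..b}-{a}. partial_deriv (\<lambda>w. k (u c) w) (u a) l))"
proof -
  define u' where "u' t = u(a := u a + t *\<^sub>R axis l 1)" for t :: real
  let ?D1 = "\<lambda>z. partial_deriv (\<lambda>w. k w z) (u a) l"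
  let ?D2 = "\<lambda>x. partial_deriv (\<lambda>w. k x w) (u a) l"
  have D1: "((\<lambda>t. k (u a + t *\<^sub>R axis l 1) z) has_real_derivative ?D1 z) (at 0)" for z
  proof -
    have "(\<lambda>w. k w z) differentiable at (u a)"
      using differentiable_at_fst_slice[of k "u a" z] k by blast
    then show ?thesis by (rule has_real_derivative_partial_deriv)
  qed
  have D2: "((\<lambda>t. k x (u a + t *\<^sub>R axis l 1)) has_real_derivative ?D2 x) (at 0)" for x
  proof -
    have "(\<lambda>w. k x w) differentiable at (u a)"
      using differentiable_at_snd_slice[of k x "u a"] k by blast
    then show ?thesis by (rule has_real_derivative_partial_deriv)
  qed
  have single: "((\<lambda>t. k (u' t c) z) has_real_derivative (if c = a then ?D1 z else 0)) (at 0)" for c z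
    using D1[of z] by (cases "c = a") (auto simp: u'_def)
  have pair: "((\<lambda>t. k (u' t c) (u' t c')) has_real_derivative
      (if c = a then ?D1 (u c') else if c' = a then ?D2 (u c) else 0)) (at 0)" if "c \<noteq> c'" for c c'
    using D1[of "u c'"] D2[of "u c"] that by (cases "c = a"; cases "c' = a") (auto simp: u'_def)
  have D: "((\<lambda>t. est_MMD_loss k b n y (u' t)) has_real_derivative
      - 2 / (real n * real b) * (\<Sum>i=1..n. \<Sum>c=1..b. (if c = a then ?D1 (y i) else 0))
      + 1 / (real b * (real b - 1)) * (\<Sum>c=1..b. \<Sum>c'\<in>{1..b} - {c}.
            (if c = a then ?D1 (u c') else if c' = a then ?D2 (u c) else 0))) (at 0)"
    unfolding est_MMD_loss_def by (intro DERIV_add DERIV_cmult DERIV_sum single pair) auto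
  have first: "(\<Sum>i=1..n. \<Sum>c=1..b. (if c = a then ?D1 (y i) else 0)) = (\<Sum>i=1..n. ?D1 (y i))"
    using a by simp
  have "partial_u (est_MMD_loss k b n y) u a l = deriv (\<lambda>t. est_MMD_loss k b n y (u' t)) 0"
    unfolding partial_u_def u'_def ..
  with DERIV_imp_deriv[OF D] show ?thesis
    unfolding first sum_offdiag_row_col[OF finite_atLeastAtMost a] by simp
qed

lemma phi_component_eq:
  assumes k: "\<forall>x z. (\<lambda>w. k (fst w) (snd w)) differentiable at (x, z)"
  shows "phi k G b n y \<theta> vs $ j =
     - 2 / (real n * real b) * (\<Sum>a=1..b. \<Sum>i=1..n. kernel_grad k G \<theta> j (vs a) (y i))
     + 1 / (real b * (real b - 1)) * (\<Sum>a=1..b. \<Sum>c\<in>{1..b}-{a}. kernel_pair_grad k G \<theta> j (vs a) (vs c))"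
proof -
  let ?c1 = "- 2 / (real n * real b)" and ?c2 = "1 / (real b * (real b - 1))"
  let ?u = "\<lambda>m. G \<theta> (vs m)"
  define g where "g v l = partial_deriv (\<lambda>\<theta>'. G \<theta>' v $ l) \<theta> j" for v l
  define X where "X a l = (\<Sum>i=1..n. partial_deriv (\<lambda>w. k w (y i)) (?u a) l)" for a l
  define Y where "Y a l = (\<Sum>c\<in>{1..b}-{a}. partial_deriv (\<lambda>w. k w (?u c)) (?u a) l)" for a l
  define Z where "Z a l = (\<Sum>c\<in>{1..b}-{a}. partial_deriv (\<lambda>w. k (?u c) w) (?u a) l)" for a l
  have "phi k G b n y \<theta> vs $ j = (\<Sum>a=1..b. \<Sum>l\<in>UNIV. (?c1 * X a l + ?c2 * (Y a l + Z a l)) * g (vs a) l)"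
    unfolding phi_def X_def Y_def Z_def g_def
    by (auto intro!: sum.cong simp: partial_u_est_MMD_loss[OF k])
  also have "\<dots> = ?c1 * (\<Sum>a=1..b. \<Sum>l\<in>UNIV. X a l * g (vs a) l)
      + ?c2 * ((\<Sum>a=1..b. \<Sum>l\<in>UNIV. Y a l * g (vs a) l) + (\<Sum>a=1..b. \<Sum>l\<in>UNIV. Z a l * g (vs a) l))"
  proof -
    have "(?c1 * X a l + ?c2 * (Y a l + Z a l)) * g (vs a) l
       = ?c1 * (X a l * g (vs a) l) + (?c2 * (Y a l * g (vs a) l) + ?c2 * (Z a l * g (vs a) l))" for a l
      by (simp add: algebra_simps add_divide_distrib)
    then show ?thesis by (simp only: sum.distrib sum_distrib_left distrib_left)
  qed
  also have "(\<Sum>a=1..b. \<Sum>l\<in>UNIV. X a l * g (vs a) l) = (\<Sum>a=1..b. \<Sum>i=1..n. kernel_grad k G \<theta> j (vs a) (y i))"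
    unfolding X_def kernel_grad_def g_def sum_distrib_right by (intro sum.cong refl sum.swap)
  also have "(\<Sum>a=1..b. \<Sum>l\<in>UNIV. Y a l * g (vs a) l)
     = (\<Sum>a=1..b. \<Sum>c\<in>{1..b}-{a}. \<Sum>l\<in>UNIV. partial_deriv (\<lambda>w. k w (?u c)) (?u a) l * g (vs a) l)"
    unfolding Y_def sum_distrib_right by (intro sum.cong refl sum.swap)
  also have "(\<Sum>a=1..b. \<Sum>l\<in>UNIV. Z a l * g (vs a) l)
     = (\<Sum>a=1..b. \<Sum>c\<in>{1..b}-{a}. \<Sum>l\<in>UNIV. partial_deriv (\<lambda>w. k (?u c) w) (?u a) l * g (vs a) l)"
    unfolding Z_def sum_distrib_right by (intro sum.cong refl sum.swap)
  \<comment> \<open>Swap the roles of a and c, so that both halves of a pair term are indexed by the same (a, c).\<close>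
  also have "\<dots> = (\<Sum>a=1..b. \<Sum>c\<in>{1..b}-{a}. \<Sum>l\<in>UNIV. partial_deriv (\<lambda>w. k (?u a) w) (?u c) l * g (vs c) l)"
    by (rule sum_offdiag_swap[symmetric]) simp
  finally show ?thesis
    unfolding kernel_pair_grad_def g_def by (simp add: sum.distrib)
qed

section \<open>Sampling coordinates of a product measure\<close>

lemma distr_PiM_pair_components:
  assumes M: "prob_space M" and I: "finite I" "a \<in> I" "c \<in> I" "a \<noteq> c"
  shows "distr (PiM I (\<lambda>_. M)) (M \<Otimes>\<^sub>M M) (\<lambda>x. (x a, x c)) = M \<Otimes>\<^sub>M M"
proof (rule pair_measure_eqI[symmetric])
  interpret prob_space M by fact
  show "sigma_finite_measure M" by unfold_locales
  show "sigma_finite_measure M" by unfold_locales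
  show "sets (M \<Otimes>\<^sub>M M) = sets (distr (PiM I (\<lambda>_. M)) (M \<Otimes>\<^sub>M M) (\<lambda>x. (x a, x c)))"
    by simp
  fix A B assume A: "A \<in> sets M" and B: "B \<in> sets M"
  have meas: "(\<lambda>x. (x a, x c)) \<in> measurable (PiM I (\<lambda>_. M)) (M \<Otimes>\<^sub>M M)"
    using I by measurable
  have preimage: "(\<lambda>x. (x a, x c)) -` (A \<times> B) \<inter> space (PiM I (\<lambda>_. M))
      = prod_emb I (\<lambda>_. M) {a, c} (Pi\<^sub>E {a, c} (\<lambda>i. if i = a then A else B))"
    using I by (auto simp: prod_emb_def space_PiM PiE_iff)
  have "emeasure (distr (PiM I (\<lambda>_. M)) (M \<Otimes>\<^sub>M M) (\<lambda>x. (x a, x c))) (A \<times> B)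
      = emeasure (PiM I (\<lambda>_. M)) ((\<lambda>x. (x a, x c)) -` (A \<times> B) \<inter> space (PiM I (\<lambda>_. M)))"
    using A B meas by (intro emeasure_distr) auto
  also have "\<dots> = (\<Prod>i\<in>{a, c}. emeasure M (if i = a then A else B))"
    unfolding preimage using I A B M by (intro emeasure_PiM_emb) auto
  also have "\<dots> = emeasure M A * emeasure M B"
    using I by simp
  finally show "emeasure M A * emeasure M B
      = emeasure (distr (PiM I (\<lambda>_. M)) (M \<Otimes>\<^sub>M M) (\<lambda>x. (x a, x c))) (A \<times> B)"
    by simp
qed

lemma integral_PiM_sum_components:
  fixes f :: "'a \<Rightarrow> real"
  assumes M: "prob_space M" and I: "finite I" and f: "integrable M f"
  shows "integrable (PiM I (\<lambda>_. M)) (\<lambda>x. \<Sum>i\<in>I. f (x i))"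
    and "(\<integral>x. (\<Sum>i\<in>I. f (x i)) \<partial>PiM I (\<lambda>_. M)) = real (card I) * integral\<^sup>L M f"
proof -
  have component: "integrable (PiM I (\<lambda>_. M)) (\<lambda>x. f (x i))"
      "(\<integral>x. f (x i) \<partial>PiM I (\<lambda>_. M)) = integral\<^sup>L M f" if i: "i \<in> I" for i
  proof -
    have distr: "distr (PiM I (\<lambda>_. M)) M (\<lambda>x. x i) = M"
      using distr_PiM_component[of I "\<lambda>_. M" i] M i by auto
    have meas: "(\<lambda>x. x i) \<in> measurable (PiM I (\<lambda>_. M)) M"
      using i by measurable
    have fm: "f \<in> borel_measurable M"
      using f by auto
    show "integrable (PiM I (\<lambda>_. M)) (\<lambda>x. f (x i))"
        "(\<integral>x. f (x i) \<partial>PiM I (\<lambda>_. M)) = integral\<^sup>L M f"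
      using integrable_distr_eq[OF meas fm] integral_distr[OF meas fm] f distr by simp_all
  qed
  then show "integrable (PiM I (\<lambda>_. M)) (\<lambda>x. \<Sum>i\<in>I. f (x i))"
    by (intro Bochner_Integration.integrable_sum)
  then show "(\<integral>x. (\<Sum>i\<in>I. f (x i)) \<partial>PiM I (\<lambda>_. M)) = real (card I) * integral\<^sup>L M f"
    using component by (simp add: Bochner_Integration.integral_sum)
qed

lemma integral_PiM_sum_offdiag:
  fixes f :: "'a \<times> 'a \<Rightarrow> real"
  assumes M: "prob_space M" and I: "finite I" and f: "integrable (M \<Otimes>\<^sub>M M) f"
  shows "integrable (PiM I (\<lambda>_. M)) (\<lambda>x. \<Sum>i\<in>I. \<Sum>i'\<in>I - {i}. f (x i, x i'))"
    and "(\<integral>x. (\<Sum>i\<in>I. \<Sum>i'\<in>I - {i}. f (x i, x i')) \<partial>PiM I (\<lambda>_. M))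
           = real (card I) * (real (card I) - 1) * integral\<^sup>L (M \<Otimes>\<^sub>M M) f"
proof -
  have pair: "integrable (PiM I (\<lambda>_. M)) (\<lambda>x. f (x i, x i'))"
      "(\<integral>x. f (x i, x i') \<partial>PiM I (\<lambda>_. M)) = integral\<^sup>L (M \<Otimes>\<^sub>M M) f"
    if i: "i \<in> I" and i': "i' \<in> I - {i}" for i i'
  proof -
    have distr: "distr (PiM I (\<lambda>_. M)) (M \<Otimes>\<^sub>M M) (\<lambda>x. (x i, x i')) = M \<Otimes>\<^sub>M M"
      using i i' by (intro distr_PiM_pair_components[OF M I]) auto
    have meas: "(\<lambda>x. (x i, x i')) \<in> measurable (PiM I (\<lambda>_. M)) (M \<Otimes>\<^sub>M M)"
      using i i' by (intro measurable_Pair measurable_component_singleton) auto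
    have fm: "f \<in> borel_measurable (M \<Otimes>\<^sub>M M)"
      using f by auto
    show "integrable (PiM I (\<lambda>_. M)) (\<lambda>x. f (x i, x i'))"
        "(\<integral>x. f (x i, x i') \<partial>PiM I (\<lambda>_. M)) = integral\<^sup>L (M \<Otimes>\<^sub>M M) f"
      using integrable_distr_eq[OF meas fm] integral_distr[OF meas fm] f distr by simp_all
  qed
  then show "integrable (PiM I (\<lambda>_. M)) (\<lambda>x. \<Sum>i\<in>I. \<Sum>i'\<in>I - {i}. f (x i, x i'))"
    by (intro Bochner_Integration.integrable_sum)
  have "(\<integral>x. (\<Sum>i\<in>I. \<Sum>i'\<in>I - {i}. f (x i, x i')) \<partial>PiM I (\<lambda>_. M))
      = (\<Sum>i\<in>I. \<integral>x. (\<Sum>i'\<in>I - {i}. f (x i, x i')) \<partial>PiM I (\<lambda>_. M))"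
    using pair(1) by (intro Bochner_Integration.integral_sum Bochner_Integration.integrable_sum) auto
  also have "\<dots> = (\<Sum>i\<in>I. \<Sum>i'\<in>I - {i}. \<integral>x. f (x i, x i') \<partial>PiM I (\<lambda>_. M))"
    using pair(1) by (intro sum.cong refl Bochner_Integration.integral_sum) auto
  also have "\<dots> = (\<Sum>i\<in>I. \<Sum>i'\<in>I - {i}. integral\<^sup>L (M \<Otimes>\<^sub>M M) f)"
    using pair(2) by (intro sum.cong refl) auto
  also have "\<dots> = (\<Sum>i\<in>I. (real (card I) - 1) * integral\<^sup>L (M \<Otimes>\<^sub>M M) f)"
  proof (rule sum.cong[OF refl])
    fix i assume i: "i \<in> I"
    then have "1 \<le> card I"
      using I by (metis One_nat_def Suc_leI card_gt_0_iff empty_iff)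
    then show "(\<Sum>i'\<in>I - {i}. integral\<^sup>L (M \<Otimes>\<^sub>M M) f) = (real (card I) - 1) * integral\<^sup>L (M \<Otimes>\<^sub>M M) f"
      using I i by (simp add: of_nat_diff)
  qed
  finally show "(\<integral>x. (\<Sum>i\<in>I. \<Sum>i'\<in>I - {i}. f (x i, x i')) \<partial>PiM I (\<lambda>_. M))
      = real (card I) * (real (card I) - 1) * integral\<^sup>L (M \<Otimes>\<^sub>M M) f"
    by simp
qed

section \<open>Unbiasedness and the bound on the switching rate\<close>

lemma integral_phi_eq_partial_deriv_MMD_loss:
  fixes k :: "real^'p \<Rightarrow> real^'p \<Rightarrow> real" and G :: "real^'d \<Rightarrow> 'v \<Rightarrow> real^'p"
  assumes pv: "prob_space pv" and b: "b \<ge> 2"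
    and k: "\<forall>x z. (\<lambda>w. k (fst w) (snd w)) differentiable at (x, z)"
    and G: "\<forall>v. (\<lambda>\<theta>'. G \<theta>' v) differentiable at \<theta>"
    and int_single: "\<And>i. i \<in> {1..n} \<Longrightarrow>
          integrable pv (\<lambda>v. partial_deriv (\<lambda>\<theta>'. k (G \<theta>' v) (y i)) \<theta> j)"
    and deriv_single: "\<And>i. i \<in> {1..n} \<Longrightarrow>
          ((\<lambda>t. \<integral>v. k (G (\<theta> + t *\<^sub>R axis j 1) v) (y i) \<partial>pv) has_real_derivative
             (\<integral>v. partial_deriv (\<lambda>\<theta>'. k (G \<theta>' v) (y i)) \<theta> j \<partial>pv)) (at 0)"
    and int_pair: "integrable (pv \<Otimes>\<^sub>M pv)
          (\<lambda>z. partial_deriv (\<lambda>\<theta>'. k (G \<theta>' (fst z)) (G \<theta>' (snd z))) \<theta> j)"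
    and deriv_pair: "((\<lambda>t. \<integral>z. k (G (\<theta> + t *\<^sub>R axis j 1) (fst z)) (G (\<theta> + t *\<^sub>R axis j 1) (snd z))
             \<partial>(pv \<Otimes>\<^sub>M pv)) has_real_derivative
          (\<integral>z. partial_deriv (\<lambda>\<theta>'. k (G \<theta>' (fst z)) (G \<theta>' (snd z))) \<theta> j \<partial>(pv \<Otimes>\<^sub>M pv))) (at 0)"
  shows "(\<integral>vs. phi k G b n y \<theta> vs $ j \<partial>PiM {1..b} (\<lambda>_. pv)) = partial_deriv (MMD_loss k pv G n y) \<theta> j"
proof -
  define f where "f i v = partial_deriv (\<lambda>\<theta>'. k (G \<theta>' v) (y i)) \<theta> j" for i v
  define g where "g z = partial_deriv (\<lambda>\<theta>'. k (G \<theta>' (fst z)) (G \<theta>' (snd z))) \<theta> j" for z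
  have phi: "phi k G b n y \<theta> vs $ j
      = - 2 / (real n * real b) * (\<Sum>a=1..b. (\<lambda>v. \<Sum>i=1..n. f i v) (vs a))
        + 1 / (real b * (real b - 1)) * (\<Sum>a=1..b. \<Sum>c\<in>{1..b}-{a}. g (vs a, vs c))" for vs
    unfolding phi_component_eq[OF k] f_def g_def
    by (simp add: kernel_grad_eq_partial_deriv[OF k] kernel_pair_grad_eq_partial_deriv[OF k] G)
  have int_f: "integrable pv (\<lambda>v. \<Sum>i=1..n. f i v)"
    using int_single unfolding f_def by (intro Bochner_Integration.integrable_sum) auto
  note single = integral_PiM_sum_components[OF pv finite_atLeastAtMost[of 1 b] int_f]
  note pair = integral_PiM_sum_offdiag[OF pv finite_atLeastAtMost[of 1 b] int_pair[folded g_def]]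
  have "(\<integral>vs. phi k G b n y \<theta> vs $ j \<partial>PiM {1..b} (\<lambda>_. pv))
      = - 2 / (real n * real b) * (real b * (\<integral>v. (\<Sum>i=1..n. f i v) \<partial>pv))
        + 1 / (real b * (real b - 1)) * (real b * (real b - 1) * integral\<^sup>L (pv \<Otimes>\<^sub>M pv) g)"
    unfolding phi using single pair by (simp del: One_nat_def)
  also have "\<dots> = - 2 / real n * (\<Sum>i=1..n. integral\<^sup>L pv (f i)) + integral\<^sup>L (pv \<Otimes>\<^sub>M pv) g"
  proof -
    have "(\<integral>v. (\<Sum>i=1..n. f i v) \<partial>pv) = (\<Sum>i=1..n. integral\<^sup>L pv (f i))"
      using int_single unfolding f_def by (intro Bochner_Integration.integral_sum) auto
    then show ?thesis
      using b by (simp add: field_simps)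
  qed
  also have "\<dots> = partial_deriv (MMD_loss k pv G n y) \<theta> j"
  proof -
    have "((\<lambda>t. MMD_loss k pv G n y (\<theta> + t *\<^sub>R axis j 1)) has_real_derivative
        - 2 / real n * (\<Sum>i=1..n. integral\<^sup>L pv (f i)) + integral\<^sup>L (pv \<Otimes>\<^sub>M pv) g) (at 0)"
      unfolding MMD_loss_def f_def g_def using deriv_single deriv_pair
      by (intro DERIV_add DERIV_cmult DERIV_sum) auto
    then show ?thesis
      unfolding partial_deriv_def by (rule DERIV_imp_deriv[symmetric])
  qed
  finally show ?thesis .
qed

lemma abs_phi_component_le:
  assumes k: "\<forall>x z. (\<lambda>w. k (fst w) (snd w)) differentiable at (x, z)" and b: "b \<ge> 2"
    and single: "\<And>a i. a \<in> {1..b} \<Longrightarrow> i \<in> {1..n} \<Longrightarrow> \<bar>kernel_grad k G \<theta> j (vs a) (y i)\<bar> \<le> q i"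
    and pair: "\<And>a c. a \<in> {1..b} \<Longrightarrow> c \<in> {1..b} \<Longrightarrow> \<bar>kernel_pair_grad k G \<theta> j (vs a) (vs c)\<bar> \<le> r"
  shows "\<bar>phi k G b n y \<theta> vs $ j\<bar> \<le> 2 / real n * (\<Sum>i=1..n. q i) + r"
proof -
  let ?SA = "\<Sum>a=1..b. \<Sum>i=1..n. kernel_grad k G \<theta> j (vs a) (y i)"
  let ?SB = "\<Sum>a=1..b. \<Sum>c\<in>{1..b}-{a}. kernel_pair_grad k G \<theta> j (vs a) (vs c)"
  have SA: "\<bar>?SA\<bar> \<le> real b * (\<Sum>i=1..n. q i)"
  proof -
    have "\<bar>?SA\<bar> \<le> (\<Sum>a=1..b. \<Sum>i=1..n. \<bar>kernel_grad k G \<theta> j (vs a) (y i)\<bar>)"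
      by (rule order_trans[OF sum_abs sum_mono]) (rule sum_abs)
    also have "\<dots> \<le> (\<Sum>a=1..b. \<Sum>i=1..n. q i)"
      by (intro sum_mono single) auto
    finally show ?thesis by simp
  qed
  have SB: "\<bar>?SB\<bar> \<le> real b * (real b - 1) * r"
  proof -
    have "\<bar>?SB\<bar> \<le> (\<Sum>a=1..b. \<Sum>c\<in>{1..b}-{a}. \<bar>kernel_pair_grad k G \<theta> j (vs a) (vs c)\<bar>)"
      by (rule order_trans[OF sum_abs sum_mono]) (rule sum_abs)
    also have "\<dots> \<le> (\<Sum>a=1..b. \<Sum>c\<in>{1..b}-{a}. r)"
      by (intro sum_mono pair) auto
    also have "\<dots> = (\<Sum>a=1..b. (real b - 1) * r)"
      using b by (intro sum.cong refl) (simp add: of_nat_diff)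
    finally show ?thesis by simp
  qed
  have "\<bar>phi k G b n y \<theta> vs $ j\<bar> \<le> 2 / (real n * real b) * \<bar>?SA\<bar> + 1 / (real b * (real b - 1)) * \<bar>?SB\<bar>"
    unfolding phi_component_eq[OF k]
    using abs_triangle_ineq[of "- 2 / (real n * real b) * ?SA" "1 / (real b * (real b - 1)) * ?SB"] b
    by (simp add: abs_mult)
  also have "\<dots> \<le> 2 / (real n * real b) * (real b * (\<Sum>i=1..n. q i))
      + 1 / (real b * (real b - 1)) * (real b * (real b - 1) * r)"
    using SA SB b by (intro add_mono mult_left_mono) auto
  also have "\<dots> = 2 / real n * (\<Sum>i=1..n. q i) + r"
    using b by (simp add: field_simps)
  finally show ?thesis .
qed

lemma lambda_hat_le:
  assumes "\<nu> $ j \<in> {-1, 1}" and "\<omega> \<ge> 0"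
  shows "lambda_hat prior \<omega> ph \<theta> \<nu> j
      \<le> \<bar>partial_deriv (\<lambda>\<theta>'. ln (prior \<theta>')) \<theta> j\<bar> + \<omega> * \<bar>ph $ j\<bar>"
proof -
  let ?L = "partial_deriv (\<lambda>\<theta>'. ln (prior \<theta>')) \<theta> j"
  have "lambda_hat prior \<omega> ph \<theta> \<nu> j \<le> \<bar>- ?L + \<omega> * ph $ j\<bar>"
    using assms(1) unfolding lambda_hat_def by auto
  also have "\<dots> \<le> \<bar>?L\<bar> + \<omega> * \<bar>ph $ j\<bar>"
    using abs_triangle_ineq[of "- ?L" "\<omega> * ph $ j"] assms(2) by (simp add: abs_mult)
  finally show ?thesis .
qed

lemma lambda_hat_phi_le:
  fixes Q :: "'d \<Rightarrow> real^'p \<Rightarrow> real^'d \<Rightarrow> real" and R :: "'d \<Rightarrow> real^'d \<Rightarrow> real"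
  assumes k: "\<forall>x z. (\<lambda>w. k (fst w) (snd w)) differentiable at (x, z)" and b: "b \<ge> 2"
    and k_sym: "\<forall>x z. k x z = k z x" and \<omega>: "\<omega> \<ge> 0"
    and vs: "\<forall>m\<in>{1..b}. vs m \<in> S" and \<nu>: "\<nu> $ j \<in> {-1, 1}"
    and Q: "\<And>v yy. v \<in> S \<Longrightarrow> \<bar>\<Sum>l\<in>UNIV. partial_deriv (\<lambda>u. k yy u) (G \<theta> v) l
                                      * partial_deriv (\<lambda>\<theta>'. G \<theta>' v $ l) \<theta> j\<bar> \<le> Q j yy \<theta>"
    and R: "\<And>v v'. v \<in> S \<Longrightarrow> v' \<in> S \<Longrightarrow> \<bar>kernel_pair_grad k G \<theta> j v v'\<bar> \<le> R j \<theta>"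
  shows "lambda_hat prior \<omega> (phi k G b n y \<theta> vs) \<theta> \<nu> j
      \<le> \<bar>partial_deriv (\<lambda>\<theta>'. ln (prior \<theta>')) \<theta> j\<bar>
        + \<omega> * (2 / real n * (\<Sum>i=1..n. Q j (y i) \<theta>)) + \<omega> * R j \<theta>"
proof -
  have "\<bar>phi k G b n y \<theta> vs $ j\<bar> \<le> 2 / real n * (\<Sum>i=1..n. Q j (y i) \<theta>) + R j \<theta>"
  proof (rule abs_phi_component_le[OF k b])
    fix a i assume "a \<in> {1..b}"
    then have "vs a \<in> S"
      using vs by blast
    moreover have "(\<lambda>u. k u (y i)) = (\<lambda>u. k (y i) u)"
      using k_sym by auto
    ultimately show "\<bar>kernel_grad k G \<theta> j (vs a) (y i)\<bar> \<le> Q j (y i) \<theta>"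
      using Q unfolding kernel_grad_def by auto
  next
    fix a c assume "a \<in> {1..b}" "c \<in> {1..b}"
    then show "\<bar>kernel_pair_grad k G \<theta> j (vs a) (vs c)\<bar> \<le> R j \<theta>"
      using vs R by blast
  qed
  then have "\<omega> * \<bar>phi k G b n y \<theta> vs $ j\<bar> \<le> \<omega> * (2 / real n * (\<Sum>i=1..n. Q j (y i) \<theta>)) + \<omega> * R j \<theta>"
    using \<omega> by (metis distrib_left mult_left_mono)
  moreover have "lambda_hat prior \<omega> (phi k G b n y \<theta> vs) \<theta> \<nu> j
      \<le> \<bar>partial_deriv (\<lambda>\<theta>'. ln (prior \<theta>')) \<theta> j\<bar> + \<omega> * \<bar>phi k G b n y \<theta> vs $ j\<bar>"
    using \<nu> \<omega> by (rule lambda_hat_le)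
  ultimately show ?thesis
    by linarith
qed

theorem lemmaB4:
  fixes k :: "real^'p \<Rightarrow> real^'p \<Rightarrow> real"
    and G :: "real^'d \<Rightarrow> 'v \<Rightarrow> real^'p"
    and pv :: "'v measure"
    and y :: "nat \<Rightarrow> real^'p"
    and n b :: nat
    and Theta :: "(real^'d) set"
    and prior :: "real^'d \<Rightarrow> real"
    and \<omega> :: real
  assumes pv: "prob_space pv"
    and n: "n \<ge> 1"
    and b: "b \<ge> 2"
    and Theta_open: "open Theta"
    and k_nonneg: "\<forall>x z. k x z \<ge> 0"
    and k_sym: "\<forall>x z. k x z = k z x"
    and k_pd: "pd_kernel k"
    and k_diff: "\<forall>x z. (\<lambda>w. k (fst w) (snd w)) differentiable (at (x, z))"
    and G_meas: "\<forall>\<theta>. (\<lambda>v. G \<theta> v) \<in> borel_measurable pv"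
    and G_diff: "\<forall>v. \<forall>\<theta>\<in>Theta. (\<lambda>\<theta>'. G \<theta>' v) differentiable (at \<theta>)"
    and prior: "\<forall>\<theta>\<in>Theta. prior \<theta> > 0 \<and> prior differentiable (at \<theta>)"
    and \<omega>: "\<omega> > 0"
    and interchange1: "\<forall>\<theta>\<in>Theta. \<forall>j. \<forall>i\<in>{1..n}.
        integrable pv (\<lambda>v. partial_deriv (\<lambda>\<theta>'. k (G \<theta>' v) (y i)) \<theta> j) \<and>
        ((\<lambda>t. \<integral>v. k (G (\<theta> + t *\<^sub>R axis j 1) v) (y i) \<partial>pv)
           has_real_derivative (\<integral>v. partial_deriv (\<lambda>\<theta>'. k (G \<theta>' v) (y i)) \<theta> j \<partial>pv)) (at 0)"
    and interchange2: "\<forall>\<theta>\<in>Theta. \<forall>j.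
        integrable (pv \<Otimes>\<^sub>M pv)
          (\<lambda>z. partial_deriv (\<lambda>\<theta>'. k (G \<theta>' (fst z)) (G \<theta>' (snd z))) \<theta> j) \<and>
        ((\<lambda>t. \<integral>z. k (G (\<theta> + t *\<^sub>R axis j 1) (fst z)) (G (\<theta> + t *\<^sub>R axis j 1) (snd z)) \<partial>(pv \<Otimes>\<^sub>M pv))
           has_real_derivative
           (\<integral>z. partial_deriv (\<lambda>\<theta>'. k (G \<theta>' (fst z)) (G \<theta>' (snd z))) \<theta> j \<partial>(pv \<Otimes>\<^sub>M pv))) (at 0)"
  shows "(\<forall>\<theta>\<in>Theta. \<forall>j.
            (\<integral>vs. phi k G b n y \<theta> vs $ j \<partial>(PiM {1..b} (\<lambda>_. pv)))
              = partial_deriv (MMD_loss k pv G n y) \<theta> j)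
       \<and> (\<forall>(Q :: 'd \<Rightarrow> real^'p \<Rightarrow> real^'d \<Rightarrow> real) (R :: 'd \<Rightarrow> real^'d \<Rightarrow> real) (S :: 'v set).
            (\<forall>j. \<forall>\<theta>\<in>Theta. \<forall>v\<in>S. \<forall>v'\<in>S. \<forall>yy.
               Q j yy \<theta> \<ge> \<bar>\<Sum>l\<in>UNIV. partial_deriv (\<lambda>u. k yy u) (G \<theta> v) l
                                      * partial_deriv (\<lambda>\<theta>'. G \<theta>' v $ l) \<theta> j\<bar>
             \<and> R j \<theta> \<ge> \<bar>\<Sum>l\<in>UNIV. partial_deriv (\<lambda>u. k u (G \<theta> v')) (G \<theta> v) l
                                      * partial_deriv (\<lambda>\<theta>'. G \<theta>' v $ l) \<theta> j
                                    + partial_deriv (\<lambda>u'. k (G \<theta> v) u') (G \<theta> v') l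
                                      * partial_deriv (\<lambda>\<theta>'. G \<theta>' v' $ l) \<theta> j\<bar>)
            \<longrightarrow> (\<forall>vs \<theta> \<nu> j. (\<forall>m\<in>{1..b}. vs m \<in> S) \<longrightarrow> \<theta> \<in> Theta
                   \<longrightarrow> (\<forall>i. \<nu> $ i \<in> {-1, 1})
                   \<longrightarrow> lambda_hat prior \<omega> (phi k G b n y \<theta> vs) \<theta> \<nu> j
                       \<le> \<bar>partial_deriv (\<lambda>\<theta>'. ln (prior \<theta>')) \<theta> j\<bar>
                          + \<omega> * (2 / real n * (\<Sum>i=1..n. Q j (y i) \<theta>))
                          + \<omega> * R j \<theta>))"
proof -
  have k: "\<forall>x z. (\<lambda>w. k (fst w) (snd w)) differentiable at (x, z)"
    using k_diff by blast
  show ?thesis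
  proof (intro conjI ballI allI impI)
    fix \<theta> j assume \<theta>: "\<theta> \<in> Theta"
    show "(\<integral>vs. phi k G b n y \<theta> vs $ j \<partial>PiM {1..b} (\<lambda>_. pv)) = partial_deriv (MMD_loss k pv G n y) \<theta> j"
      using G_diff interchange1 interchange2 \<theta>
      by (intro integral_phi_eq_partial_deriv_MMD_loss[OF pv b k]) auto
  qed (rule lambda_hat_phi_le[OF k b k_sym less_imp_le[OF \<omega>]], assumption,
       auto simp: kernel_pair_grad_def)
qed

end
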